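(* Let $\lambda$ be an infinite cardinal. For every coloring $c:[\lambda^+]^2\to\lambda$ there exists a coloring $c^+:[\lambda^+]^2\to\lambda^+$ such that for every cardinal $\mu\le\lambda$ and every partition $p:[\lambda^+]^2\to\mu$: (1) if $c$ witnesses $\lambda^+\nrightarrow_p[\lambda^+]^2_\lambda$ then $c^+$ witnesses $\lambda^+\nrightarrow_p[\lambda^+]^2_{\lambda^+}$; (2) for every cardinal $\varkappa$, if $c$ witnesses $\lambda^+\nrightarrow_p[\varkappa\circledast\lambda^+]^2_\lambda$ then $c^+$ witnesses $\lambda^+\nrightarrow_p[\varkappa\circledast\lambda^+]^2_{\lambda^+}$.
   Context: $[\kappa]^2$ denotes the set of pairs $(\alpha,\beta)$ with $\alpha<\beta<\kappa$; a partition is any function $p:[\kappa]^2\to\mu$. Given $p:[\kappa]^2\to\mu$, a coloring $c:[\kappa]^2\to\theta$ witnesses $\kappa\nrightarrow_p[\kappa]^2_\theta$ iff for every $A\subseteq\kappa$ with $|A|=\kappa$ and every $\tau:\mu\to\theta$ there are $\alpha<\beta$ in $A$ with $c(\alpha,\beta)=\tau(p(\alpha,\beta))$. It witnesses $\kappa\nrightarrow_p[\varkappa\circledast\kappa]^2_\theta$ iff for every $A\subseteq\kappa$ with $|A|=\varkappa$, every $B\subseteq\kappa$ with $|B|=\kappa$, and every $\tau:\mu\to\theta$ there are $\alpha\in A$ and $\beta\in B$ with $\alpha<\beta$ and $c(\alpha,\beta)=\tau(p(\alpha,\beta))$. *)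

theory Defs
  imports Main "HOL-Library.FuncSet"
begin

text \<open>An ordinal kappa is modelled by a carrier set K together with a well-order r on K
  (Field r = K); alpha < beta means (alpha, beta) in r and alpha different from beta.\<close>

definition strict_less :: "'a rel \<Rightarrow> 'a \<Rightarrow> 'a \<Rightarrow> bool" where
  "strict_less r \<alpha> \<beta> \<longleftrightarrow> (\<alpha>, \<beta>) \<in> r \<and> \<alpha> \<noteq> \<beta>"

definition coloring_on :: "'a set \<Rightarrow> 'a rel \<Rightarrow> ('a \<Rightarrow> 'a \<Rightarrow> 'c) \<Rightarrow> 'c set \<Rightarrow> bool" where
  "coloring_on K r c \<Theta> \<longleftrightarrow>
     (\<forall>\<alpha>\<in>K. \<forall>\<beta>\<in>K. strict_less r \<alpha> \<beta> \<longrightarrow> c \<alpha> \<beta> \<in> \<Theta>)"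

text \<open>c witnesses kappa -/->_p [kappa]^2_theta, where p : [kappa]^2 -> M (|M| = mu)
  and c : [kappa]^2 -> Theta (|Theta| = theta).\<close>
definition witnesses_sq ::
  "'a set \<Rightarrow> 'a rel \<Rightarrow> ('a \<Rightarrow> 'a \<Rightarrow> 'm) \<Rightarrow> 'm set \<Rightarrow> ('a \<Rightarrow> 'a \<Rightarrow> 'c) \<Rightarrow> 'c set \<Rightarrow> bool" where
  "witnesses_sq K r p M c \<Theta> \<longleftrightarrow>
     (\<forall>A. A \<subseteq> K \<longrightarrow> (card_of A, card_of K) \<in> ordIso \<longrightarrow>
        (\<forall>\<tau> \<in> M \<rightarrow> \<Theta>. \<exists>\<alpha>\<in>A. \<exists>\<beta>\<in>A. strict_less r \<alpha> \<beta> \<and> c \<alpha> \<beta> = \<tau> (p \<alpha> \<beta>)))"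

text \<open>c witnesses kappa -/->_p [varkappa (*) kappa]^2_theta, where |X| = varkappa.\<close>
definition witnesses_circ ::
  "'a set \<Rightarrow> 'a rel \<Rightarrow> ('a \<Rightarrow> 'a \<Rightarrow> 'm) \<Rightarrow> 'm set \<Rightarrow> ('a \<Rightarrow> 'a \<Rightarrow> 'c) \<Rightarrow> 'c set \<Rightarrow> 'x set \<Rightarrow> bool" where
  "witnesses_circ K r p M c \<Theta> X \<longleftrightarrow>
     (\<forall>A B. A \<subseteq> K \<longrightarrow> B \<subseteq> K \<longrightarrow> (card_of A, card_of X) \<in> ordIso \<longrightarrow>
        (card_of B, card_of K) \<in> ordIso \<longrightarrow>
        (\<forall>\<tau> \<in> M \<rightarrow> \<Theta>. \<exists>\<alpha>\<in>A. \<exists>\<beta>\<in>B. strict_less r \<alpha> \<beta> \<and> c \<alpha> \<beta> = \<tau> (p \<alpha> \<beta>)))"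

end

(* Fix, for every beta < lambda^+, an injection enum beta of [0, beta] into lambda, and a
   bijection pair_code of lambda x lambda onto lambda.  Read c(alpha, beta) as a code for a
   pair (k, j) and let c^+(alpha, beta) be the eta with enum delta eta = j, where delta is the
   ordinal with enum beta delta = k.  Given a large set A and a target pattern tau : mu -> lambda^+,
   regularity of lambda^+ bounds the range of tau by some delta, and the pigeonhole principle
   yields a large B within A above delta on which enum beta delta is a constant k.  On B the
   pattern c = sigma o p with sigma(i) = pair_code (k, enum delta (tau i)) forces c^+ = tau o p,
   so every instance of sigma found by c yields an instance of tau for c^+. *)

theory Submission
  imports Defs
begin

unbundle cardinal_syntax

lemma card_of_under_ordLess:
  assumes "Card_order r" and "infinite (Field r)" and "a \<in> Field r"
  shows "|under r a| <o r"
proof -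
  have "under r a = underS r a \<union> {a}"
    using wo_rel.REFL[OF Card_order_wo_rel[OF assms(1)]] assms(3) by (rule Refl_under_underS)
  moreover have "|{a}| <o r"
    using assms(1,2) finite_ordLess_infinite card_of_Well_order card_order_on_well_order_on
    by (metis Field_card_of finite.emptyI finite_insert)
  then have "|underS r a \<union> {a}| <o r"
    using card_of_Un_ordLess_infinite_Field[OF assms(2,1) card_of_underS[OF assms(1,3)]] by blast
  ultimately show ?thesis by simp
qed

lemma regularCard_bounded_under:
  assumes "Card_order r" and "regularCard r" and "S \<subseteq> Field r" and "|S| <o r"
  shows "\<exists>\<delta> \<in> Field r. S \<subseteq> under r \<delta>"
proof (rule regularCard_UNION[OF assms(1,2) _ _ assms(4)])
  show "relChain r (under r)"
    using wo_rel.TRANS[OF Card_order_wo_rel[OF assms(1)]]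
    unfolding relChain_def under_def by (blast dest: transD)
  show "S \<subseteq> (\<Union>\<delta> \<in> Field r. under r \<delta>)"
    using assms(3) wo_rel.REFL[OF Card_order_wo_rel[OF assms(1)]]
    unfolding under_def refl_on_def by blast
qed

lemma card_of_final_segment:
  assumes "Card_order r" and "infinite (Field r)"
    and "A \<subseteq> Field r" and "|A| =o r" and "\<delta> \<in> Field r"
  shows "|{\<beta> \<in> A. (\<delta>, \<beta>) \<in> r}| =o r"
proof -
  let ?F = "{\<beta> \<in> A. (\<delta>, \<beta>) \<in> r}"
  have "\<not> |?F| <o r"
  proof
    assume "|?F| <o r"
    then have "|underS r \<delta> \<union> ?F| <o r"
      using card_of_Un_ordLess_infinite_Field[OF assms(2,1) card_of_underS[OF assms(1,5)]] by blast
    moreover have "A \<subseteq> underS r \<delta> \<union> ?F"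
      using assms(3,5) wo_rel.TOTALS[OF Card_order_wo_rel[OF assms(1)]]
      unfolding underS_def by blast
    ultimately have "|A| <o r"
      using card_of_mono1 ordLeq_ordLess_trans by blast
    then show False
      using assms(4) not_ordLess_ordIso by blast
  qed
  moreover have "|?F| \<le>o r"
    using card_of_mono1[of ?F A] assms(4) ordLeq_ordIso_trans by blast
  ultimately show ?thesis
    using ordLeq_iff_ordLess_or_ordIso by blast
qed

lemma regularCard_pigeonhole:
  assumes "Cinfinite r" and "regularCard r"
    and "|A| =o r" and "|I| <o r" and "f ` A \<subseteq> I"
  shows "\<exists>i \<in> I. |{a \<in> A. f a = i}| =o r"
proof (rule ccontr)
  assume no_large_fibre: "\<not> ?thesis"
  have "|{a \<in> A. f a = i}| \<le>o r" for i
    using card_of_mono1[of "{a \<in> A. f a = i}" A] assms(3) ordLeq_ordIso_trans by blast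
  then have "|{a \<in> A. f a = i}| <o r" if "i \<in> I" for i
    using no_large_fibre that ordLeq_iff_ordLess_or_ordIso by auto
  then have "|\<Union>i \<in> I. {a \<in> A. f a = i}| <o r"
    by (rule regularCard_UNION_bound[OF assms(1,2,4)])
  moreover have "(\<Union>i \<in> I. {a \<in> A. f a = i}) = A"
    using assms(5) by blast
  ultimately have "|A| <o r"
    by simp
  then show False
    using assms(3) not_ordLess_ordIso by blast
qed

definition pattern_reducible ::
  "'a set \<Rightarrow> 'm set \<Rightarrow> ('a \<Rightarrow> 'a \<Rightarrow> 'c) \<Rightarrow> 'c set \<Rightarrow> ('a \<Rightarrow> 'a \<Rightarrow> 'd) \<Rightarrow> 'd set \<Rightarrow> bool" where
  "pattern_reducible K M c \<Theta> d \<Delta> \<longleftrightarrow>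
     (\<forall>A \<subseteq> K. |A| =o |K| \<longrightarrow> (\<forall>\<tau> \<in> M \<rightarrow> \<Delta>. \<exists>\<sigma> \<in> M \<rightarrow> \<Theta>. \<exists>B \<subseteq> A. |B| =o |K| \<and>
        (\<forall>\<alpha>. \<forall>\<beta> \<in> B. \<forall>m \<in> M. c \<alpha> \<beta> = \<sigma> m \<longrightarrow> d \<alpha> \<beta> = \<tau> m)))"

lemma pattern_reducibleE:
  assumes "pattern_reducible K M c \<Theta> d \<Delta>" and "A \<subseteq> K" and "|A| =o |K|" and "\<tau> \<in> M \<rightarrow> \<Delta>"
  obtains \<sigma> B where "\<sigma> \<in> M \<rightarrow> \<Theta>" and "B \<subseteq> A" and "|B| =o |K|"
    and "\<And>\<alpha> \<beta> m. \<beta> \<in> B \<Longrightarrow> m \<in> M \<Longrightarrow> c \<alpha> \<beta> = \<sigma> m \<Longrightarrow> d \<alpha> \<beta> = \<tau> m"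
  using assms(1)[unfolded pattern_reducible_def, rule_format, OF assms(2-4)] that by blast

lemma witnesses_sq_pattern_reducible:
  assumes "pattern_reducible K M c \<Theta> d \<Delta>" and "coloring_on K r p M"
    and "witnesses_sq K r p M c \<Theta>"
  shows "witnesses_sq K r p M d \<Delta>"
  unfolding witnesses_sq_def
proof (intro allI impI ballI)
  fix A \<tau> assume A: "A \<subseteq> K" "|A| =o |K|" and \<tau>: "\<tau> \<in> M \<rightarrow> \<Delta>"
  obtain \<sigma> B where \<sigma>: "\<sigma> \<in> M \<rightarrow> \<Theta>" and B: "B \<subseteq> A" "|B| =o |K|"
    and forced: "\<And>\<alpha> \<beta> m. \<beta> \<in> B \<Longrightarrow> m \<in> M \<Longrightarrow> c \<alpha> \<beta> = \<sigma> m \<Longrightarrow> d \<alpha> \<beta> = \<tau> m"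
    using pattern_reducibleE[OF assms(1) A \<tau>] by blast
  obtain \<alpha> \<beta> where \<alpha>\<beta>: "\<alpha> \<in> B" "\<beta> \<in> B" "strict_less r \<alpha> \<beta>" "c \<alpha> \<beta> = \<sigma> (p \<alpha> \<beta>)"
    using assms(3)[unfolded witnesses_sq_def, rule_format, OF _ B(2) \<sigma>] B(1) A(1) by blast
  moreover have "p \<alpha> \<beta> \<in> M"
    using assms(2) \<alpha>\<beta> B(1) A(1) unfolding coloring_on_def by blast
  ultimately show "\<exists>\<alpha> \<in> A. \<exists>\<beta> \<in> A. strict_less r \<alpha> \<beta> \<and> d \<alpha> \<beta> = \<tau> (p \<alpha> \<beta>)"
    using forced B(1) by blast
qed

lemma witnesses_circ_pattern_reducible:
  assumes "pattern_reducible K M c \<Theta> d \<Delta>" and "coloring_on K r p M"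
    and "witnesses_circ K r p M c \<Theta> X"
  shows "witnesses_circ K r p M d \<Delta> X"
  unfolding witnesses_circ_def
proof (intro allI impI ballI)
  fix A C \<tau> assume A: "A \<subseteq> K" "|A| =o |X|" and C: "C \<subseteq> K" "|C| =o |K|"
    and \<tau>: "\<tau> \<in> M \<rightarrow> \<Delta>"
  obtain \<sigma> B where \<sigma>: "\<sigma> \<in> M \<rightarrow> \<Theta>" and B: "B \<subseteq> C" "|B| =o |K|"
    and forced: "\<And>\<alpha> \<beta> m. \<beta> \<in> B \<Longrightarrow> m \<in> M \<Longrightarrow> c \<alpha> \<beta> = \<sigma> m \<Longrightarrow> d \<alpha> \<beta> = \<tau> m"
    using pattern_reducibleE[OF assms(1) C \<tau>] by blast
  obtain \<alpha> \<beta> where \<alpha>\<beta>: "\<alpha> \<in> A" "\<beta> \<in> B" "strict_less r \<alpha> \<beta>" "c \<alpha> \<beta> = \<sigma> (p \<alpha> \<beta>)"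
    using assms(3)[unfolded witnesses_circ_def, rule_format, OF A(1) _ A(2) B(2) \<sigma>] B(1) C(1)
    by blast
  moreover have "p \<alpha> \<beta> \<in> M"
    using assms(2) \<alpha>\<beta> B(1) A(1) C(1) unfolding coloring_on_def by blast
  ultimately show "\<exists>\<alpha> \<in> A. \<exists>\<beta> \<in> C. strict_less r \<alpha> \<beta> \<and> d \<alpha> \<beta> = \<tau> (p \<alpha> \<beta>)"
    using forced B(1) by blast
qed

locale successor_cardinal =
  fixes L :: "'l set" and K :: "'a set" and r :: "'a rel"
  assumes infinite_L: "infinite L"
    and card_order_on_K: "card_order_on K r"
    and r_cardSuc: "r =o cardSuc |L|"
begin

lemma Field_r: "Field r = K" and Card_order_r: "Card_order r"
  using card_order_on_Card_order[OF card_order_on_K] by auto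

lemma card_of_K: "|K| =o r"
  using card_of_Field_ordIso[OF Card_order_r] by (simp add: Field_r)

lemma Cinfinite_L: "Cinfinite |L|"
  using infinite_L by (simp add: cinfinite_def Field_card_of card_of_card_order_on)

lemma Cinfinite_r: "Cinfinite r"
  using Cinfinite_cong[OF ordIso_symmetric[OF r_cardSuc] Cinfinite_cardSuc[OF Cinfinite_L]] .

lemma regularCard_r: "regularCard r"
  using regularCard_ordIso[OF ordIso_symmetric[OF r_cardSuc]
      Cinfinite_cardSuc[OF Cinfinite_L] regularCard_cardSuc[OF Cinfinite_L]] .

lemma ordLess_r_iff: "|S| <o r \<longleftrightarrow> |S| \<le>o |L|"
proof -
  have "|S| <o r \<longleftrightarrow> |S| <o cardSuc |L|"
    using ordLess_ordIso_trans[OF _ r_cardSuc] ordLess_ordIso_trans[OF _ ordIso_symmetric[OF r_cardSuc]]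
    by blast
  also have "\<dots> \<longleftrightarrow> |S| \<le>o |L|"
    by (rule cardSuc_ordLeq_ordLess[OF card_of_Card_order card_of_Card_order])
  finally show ?thesis .
qed

lemma card_of_under: "\<beta> \<in> K \<Longrightarrow> |under r \<beta>| \<le>o |L|"
  using card_of_under_ordLess[OF Card_order_r, of \<beta>] Cinfinite_r ordLess_r_iff
  unfolding cinfinite_def Field_r by blast

definition enum :: "'a \<Rightarrow> 'a \<Rightarrow> 'l" where
  "enum \<beta> = (SOME f. inj_on f (under r \<beta>) \<and> f ` under r \<beta> \<subseteq> L)"

lemma enum_inj_into: "\<beta> \<in> K \<Longrightarrow> inj_on (enum \<beta>) (under r \<beta>) \<and> enum \<beta> ` under r \<beta> \<subseteq> L"
  unfolding enum_def using card_of_under card_of_ordLeq by (metis (mono_tags, lifting) someI_ex)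

definition pair_code :: "'l \<times> 'l \<Rightarrow> 'l" where
  "pair_code = (SOME h. bij_betw h (L \<times> L) L)"

lemma bij_pair_code: "bij_betw pair_code (L \<times> L) L"
  unfolding pair_code_def
  using card_of_Times_same_infinite[OF infinite_L] card_of_ordIso by (metis someI_ex)

definition decode :: "'a \<Rightarrow> 'l \<Rightarrow> 'a" where
  "decode \<beta> x = (case inv_into (L \<times> L) pair_code x of (k, j) \<Rightarrow>
     let \<delta> = inv_into (under r \<beta>) (enum \<beta>) k in inv_into (under r \<delta>) (enum \<delta>) j)"

lemma decode_pair_code:
  assumes "\<beta> \<in> K" and "\<delta> \<in> under r \<beta>" and "\<eta> \<in> under r \<delta>"
  shows "decode \<beta> (pair_code (enum \<beta> \<delta>, enum \<delta> \<eta>)) = \<eta>"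
proof -
  have "\<delta> \<in> K"
    using assms(2) under_Field Field_r by fast
  have "(enum \<beta> \<delta>, enum \<delta> \<eta>) \<in> L \<times> L"
    using enum_inj_into assms(1,2,3) \<open>\<delta> \<in> K\<close> by blast
  then have "inv_into (L \<times> L) pair_code (pair_code (enum \<beta> \<delta>, enum \<delta> \<eta>)) = (enum \<beta> \<delta>, enum \<delta> \<eta>)"
    using bij_pair_code by (simp add: bij_betw_def)
  moreover have "inv_into (under r \<beta>) (enum \<beta>) (enum \<beta> \<delta>) = \<delta>"
    using enum_inj_into[OF assms(1)] assms(2) by (simp add: inv_into_f_f)
  moreover have "inv_into (under r \<delta>) (enum \<delta>) (enum \<delta> \<eta>) = \<eta>"
    using enum_inj_into[OF \<open>\<delta> \<in> K\<close>] assms(3) by (simp add: inv_into_f_f)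
  ultimately show ?thesis
    by (simp add: decode_def)
qed

text \<open>Codes outside the range of decoding give junk values; falling back to \<alpha> keeps
  step_up c a colouring into K.\<close>

definition step_up :: "('a \<Rightarrow> 'a \<Rightarrow> 'l) \<Rightarrow> 'a \<Rightarrow> 'a \<Rightarrow> 'a" where
  "step_up c \<alpha> \<beta> = (if decode \<beta> (c \<alpha> \<beta>) \<in> K then decode \<beta> (c \<alpha> \<beta>) else \<alpha>)"

lemma coloring_on_step_up: "coloring_on K r (step_up c) K"
  unfolding coloring_on_def step_up_def by simp

lemma pattern_reducible_step_up:
  assumes "|M| \<le>o |L|"
  shows "pattern_reducible K M c L (step_up c) K"
  unfolding pattern_reducible_def
proof (intro allI impI ballI)
  fix A \<tau> assume A: "A \<subseteq> K" "|A| =o |K|" and \<tau>: "\<tau> \<in> M \<rightarrow> K"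
  have "|\<tau> ` M| <o r"
    using ordLeq_transitive[OF card_of_image assms] ordLess_r_iff by blast
  then obtain \<delta> where \<delta>: "\<delta> \<in> K" "\<tau> ` M \<subseteq> under r \<delta>"
    using regularCard_bounded_under[OF Card_order_r regularCard_r, of "\<tau> ` M"] \<tau>
    unfolding Field_r by blast
  let ?A' = "{\<beta> \<in> A. (\<delta>, \<beta>) \<in> r}"
  have "|?A'| =o r"
    using card_of_final_segment[OF Card_order_r, of A \<delta>] Cinfinite_r A \<delta>(1)
      ordIso_transitive[OF A(2) card_of_K] unfolding cinfinite_def Field_r by blast
  moreover have "(\<lambda>\<beta>. enum \<beta> \<delta>) ` ?A' \<subseteq> L"
    using enum_inj_into A(1) unfolding under_def by blast
  ultimately obtain k where k: "k \<in> L" "|{\<beta> \<in> ?A'. enum \<beta> \<delta> = k}| =o r"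
    using regularCard_pigeonhole[OF Cinfinite_r regularCard_r] ordLess_r_iff[of L] ordLeq_refl[OF card_of_Card_order]
    by blast
  define B where "B = {\<beta> \<in> ?A'. enum \<beta> \<delta> = k}"
  define \<sigma> where "\<sigma> m = pair_code (k, enum \<delta> (\<tau> m))" for m
  have "\<sigma> \<in> M \<rightarrow> L"
    using bij_pair_code k(1) enum_inj_into[OF \<delta>(1)] \<delta>(2) \<tau> unfolding \<sigma>_def bij_betw_def by blast
  moreover have "B \<subseteq> A"
    unfolding B_def by blast
  moreover have "|B| =o |K|"
    unfolding B_def using ordIso_transitive[OF k(2) ordIso_symmetric[OF card_of_K]] .
  moreover have "step_up c \<alpha> \<beta> = \<tau> m"
    if "\<beta> \<in> B" and "m \<in> M" and "c \<alpha> \<beta> = \<sigma> m" for \<alpha> \<beta> m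
  proof -
    have "\<beta> \<in> K" and "\<delta> \<in> under r \<beta>" and "enum \<beta> \<delta> = k"
      using that(1) A(1) unfolding B_def under_def by auto
    moreover have "\<tau> m \<in> under r \<delta>"
      using \<delta>(2) that(2) by blast
    ultimately have "decode \<beta> (c \<alpha> \<beta>) = \<tau> m"
      using decode_pair_code that(3) unfolding \<sigma>_def by metis
    moreover have "\<tau> m \<in> K"
      using \<tau> that(2) by blast
    ultimately show ?thesis
      by (simp add: step_up_def)
  qed
  ultimately show "\<exists>\<sigma> \<in> M \<rightarrow> L. \<exists>B \<subseteq> A. |B| =o |K| \<and>
      (\<forall>\<alpha>. \<forall>\<beta> \<in> B. \<forall>m \<in> M. c \<alpha> \<beta> = \<sigma> m \<longrightarrow> step_up c \<alpha> \<beta> = \<tau> m)"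
    by blast
qed

end

theorem proposition3p2:
  fixes L :: "'l set" and K :: "'a set" and r :: "'a rel" and c :: "'a \<Rightarrow> 'a \<Rightarrow> 'l"
  assumes "infinite L"
    and "card_order_on K r"
    and "(r, cardSuc (card_of L)) \<in> ordIso"
    and "coloring_on K r c L"
  shows "\<exists>cplus :: 'a \<Rightarrow> 'a \<Rightarrow> 'a. coloring_on K r cplus K \<and>
    (\<forall>(M :: 'l set) (p :: 'a \<Rightarrow> 'a \<Rightarrow> 'l).
       (card_of M, card_of L) \<in> ordLeq \<longrightarrow> coloring_on K r p M \<longrightarrow>
       (witnesses_sq K r p M c L \<longrightarrow> witnesses_sq K r p M cplus K) \<and>
       (\<forall>X :: 'a set. witnesses_circ K r p M c L X \<longrightarrow> witnesses_circ K r p M cplus K X))"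
proof -
  \<comment> \<open>The construction works for any c; that c takes values in L is never used.\<close>
  interpret successor_cardinal L K r
    using assms(1-3) by unfold_locales
  show ?thesis
  proof (intro exI[of _ "step_up c"] conjI allI impI coloring_on_step_up)
    fix M :: "'l set" and p :: "'a \<Rightarrow> 'a \<Rightarrow> 'l" and X :: "'a set"
    assume M: "|M| \<le>o |L|" and p: "coloring_on K r p M"
    have reducible: "pattern_reducible K M c L (step_up c) K"
      using M by (rule pattern_reducible_step_up)
    show "witnesses_sq K r p M c L \<Longrightarrow> witnesses_sq K r p M (step_up c) K"
      by (rule witnesses_sq_pattern_reducible[OF reducible p])
    show "witnesses_circ K r p M c L X \<Longrightarrow> witnesses_circ K r p M (step_up c) K X"
      by (rule witnesses_circ_pattern_reducible[OF reducible p])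
  qed
qed

end
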